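(* Fix a variable $x$ and let $\chi$ be any formula generated by $\chi ::= p_x \mid \mathsf{K}_x\alpha \mid \neg\chi \mid (\chi\wedge\chi)$, where $p\in\mathbf{P}$ and $\alpha$ ranges over sentences. Then for every sentence $\beta$, $\mathsf{K}_\chi\beta\to\mathsf{K}_\chi\mathsf{K}_\chi\beta$ is a theorem of $\mathbf{LEL}$.
   Context: Fix a nonempty finite set $\mathbf{A}$ of agents, a countable set $\mathbf{X}$ of variables disjoint from $\mathbf{A}$, and a countable set $\mathbf{P}$ of predicate letters. Formulas and free variables: $\phi ::= p_x \mid \top \mid \neg\phi \mid (\phi\wedge\phi) \mid [x:=a]\phi \mid \mathsf{K}_X\alpha$ ($p\in\mathbf{P}$, $x\in\mathbf{X}$, $a\in\mathbf{A}$, $X\subseteq\mathbf{X}$ finite possibly empty, $\alpha$ with no free variables), $FV(p_x)=\{x\}$, $FV(\top)=\emptyset$, $FV(\neg\phi)=FV(\phi)$, $FV(\phi\wedge\psi)=FV(\phi)\cup FV(\psi)$, $FV([x:=a]\phi)=FV(\phi)\setminus\{x\}$, $FV(\mathsf{K}_X\alpha)=X$. Sentences have no free variables. $\bot:=\neg\top$, $\langle x:=a\rangle\phi:=\neg[x:=a]\neg\phi$. $\phi[y/x]$ replaces free occurrences of $x$ by $y$ (including in index sets of $\mathsf{K}_X$); admissible if $x$ has no free occurrence within the scope of any $[y:=b]$. $[\vec{x}:=\vec{a}]\phi$ abbreviates $[x_1:=a_1]\cdots[x_n:=a_n]\phi$ for equal-length strings $\vec x,\vec a$, $\mathsf{K}_{\vec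 x}:=\mathsf{K}_{\{x_1,\dots,x_n\}}$, $\mathsf{K}_x:=\mathsf{K}_{\{x\}}$, $\{\vec a\}=\{a_1,\dots,a_n\}$. $\mathbf{LEL}$: axioms — propositional tautologies; $\mathsf{K}_X(\alpha\to\beta)\to(\mathsf{K}_X\alpha\to\mathsf{K}_X\beta)$; $\mathsf{K}_X\alpha\to\mathsf{K}_Y\alpha$ ($X\subseteq Y$); $[x:=a](\phi\to\psi)\to([x:=a]\phi\to[x:=a]\psi)$; $\langle x:=a\rangle\phi\to[x:=a]\phi$; $\phi\to[x:=a]\phi$ ($x\notin FV(\phi)$); $[y:=a]([x:=a]\phi\to\phi[y/x])$ ($\phi[y/x]$ admissible); $[x:=a][y:=b]\phi\to[y:=b][x:=a]\phi$ ($x\neq y$); $\bigwedge_{a\in\mathbf{A}}[x:=a]\phi\to\phi$; $\mathsf{K}_X\alpha\to\alpha$; $[\vec{x}:=\vec{a}](\neg\mathsf{K}_{\vec{x}}\alpha\to\mathsf{K}_{\vec{x}}[\vec{x}:=\vec{a}]\neg\mathsf{K}_{\vec{x}}\alpha)$; $[x:=a]\mathsf{K}_{x}\langle x:=a\rangle\top$; $[x:=a](p_x\to\mathsf{K}_{x}[x:=a]p_x)$; $[\vec{x}:=\vec{a}](\bigwedge_{b\in B}[x:=b]\bot\to\mathsf{K}_{\vec{x}}\bigwedge_{b\in B}[x:=b]\bot)$ with $B=\mathbf{A}\setminus\{\vec a\}$. Rules: modus ponens; from sentence $\alpha$ infer $\mathsf{K}_\emptyset\alpha$; from $\phi$ infer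 $[x:=a]\phi$. Intensional distributed knowledge: for a formula $\phi$ with free variables among $\{x\}$ and $A\subseteq\mathbf{A}$, let $\phi!(A):=\bigwedge_{a\in A}\langle x:=a\rangle\phi\wedge\bigwedge_{b\in\mathbf{A}\setminus A}[x:=b]\neg\phi$. For a sentence $\alpha$, $\mathsf{K}_\phi\alpha:=\bigwedge_{\{\vec a\}\subseteq\mathbf{A}}(\phi!(\{\vec a\})\to[\vec{x}:=\vec{a}]\mathsf{K}_{\vec{x}}\alpha)$, where the conjunction ranges over all subsets of $\mathbf{A}$, each listed as a string $\vec a$ of distinct agents and paired with a string $\vec x$ of distinct variables of the same length. *)

theory Defs
  imports Main "HOL-Library.Countable"
begin

text \<open>'p: predicate letters, 'v: variables, 'a: agents.
  P p x is p_x; Asg x a phi is [x:=a]phi; K X alpha is K_X alpha.\<close>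

datatype ('p, 'v, 'a) fm =
    P 'p 'v
  | Top
  | Neg "('p, 'v, 'a) fm"
  | And "('p, 'v, 'a) fm" "('p, 'v, 'a) fm"
  | Asg 'v 'a "('p, 'v, 'a) fm"
  | K "'v set" "('p, 'v, 'a) fm"

fun FV :: "('p, 'v, 'a) fm \<Rightarrow> 'v set" where
  "FV (P p x) = {x}"
| "FV Top = {}"
| "FV (Neg \<phi>) = FV \<phi>"
| "FV (And \<phi> \<psi>) = FV \<phi> \<union> FV \<psi>"
| "FV (Asg x a \<phi>) = FV \<phi> - {x}"
| "FV (K X \<alpha>) = X"

fun wff :: "('p, 'v, 'a) fm \<Rightarrow> bool" where
  "wff (P p x) = True"
| "wff Top = True"
| "wff (Neg \<phi>) = wff \<phi>"
| "wff (And \<phi> \<psi>) = (wff \<phi> \<and> wff \<psi>)"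
| "wff (Asg x a \<phi>) = wff \<phi>"
| "wff (K X \<alpha>) = (finite X \<and> wff \<alpha> \<and> FV \<alpha> = {})"

definition sentence :: "('p, 'v, 'a) fm \<Rightarrow> bool" where
  "sentence \<phi> \<longleftrightarrow> wff \<phi> \<and> FV \<phi> = {}"

definition Bot :: "('p, 'v, 'a) fm" where "Bot = Neg Top"
definition Imp :: "('p, 'v, 'a) fm \<Rightarrow> ('p, 'v, 'a) fm \<Rightarrow> ('p, 'v, 'a) fm" where
  "Imp \<phi> \<psi> = Neg (And \<phi> (Neg \<psi>))"
definition Dia :: "'v \<Rightarrow> 'a \<Rightarrow> ('p, 'v, 'a) fm \<Rightarrow> ('p, 'v, 'a) fm" where
  "Dia x a \<phi> = Neg (Asg x a (Neg \<phi>))"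

fun Conj :: "('p, 'v, 'a) fm list \<Rightarrow> ('p, 'v, 'a) fm" where
  "Conj [] = Top"
| "Conj (\<phi> # \<phi>s) = And \<phi> (Conj \<phi>s)"

definition ConjSet :: "('i \<Rightarrow> ('p, 'v, 'a) fm) \<Rightarrow> 'i set \<Rightarrow> ('p, 'v, 'a) fm" where
  "ConjSet f S = Conj (map f (SOME xs. set xs = S \<and> distinct xs))"

definition Asgs :: "('v \<times> 'a) list \<Rightarrow> ('p, 'v, 'a) fm \<Rightarrow> ('p, 'v, 'a) fm" where
  "Asgs zs \<phi> = foldr (\<lambda>(x, a) \<psi>. Asg x a \<psi>) zs \<phi>"

definition Kvec :: "('v \<times> 'a) list \<Rightarrow> ('p, 'v, 'a) fm \<Rightarrow> ('p, 'v, 'a) fm" where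
  "Kvec zs \<alpha> = K (set (map fst zs)) \<alpha>"

fun subst :: "'v \<Rightarrow> 'v \<Rightarrow> ('p, 'v, 'a) fm \<Rightarrow> ('p, 'v, 'a) fm" where
  "subst y x (P p z) = P p (if z = x then y else z)"
| "subst y x Top = Top"
| "subst y x (Neg \<phi>) = Neg (subst y x \<phi>)"
| "subst y x (And \<phi> \<psi>) = And (subst y x \<phi>) (subst y x \<psi>)"
| "subst y x (Asg z a \<phi>) = (if z = x then Asg z a \<phi> else Asg z a (subst y x \<phi>))"
| "subst y x (K X \<alpha>) = K (if x \<in> X then insert y (X - {x}) else X) \<alpha>"

fun admissible :: "'v \<Rightarrow> 'v \<Rightarrow> ('p, 'v, 'a) fm \<Rightarrow> bool" where
  "admissible y x (P p z) = True"
| "admissible y x Top = True"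
| "admissible y x (Neg \<phi>) = admissible y x \<phi>"
| "admissible y x (And \<phi> \<psi>) = (admissible y x \<phi> \<and> admissible y x \<psi>)"
| "admissible y x (Asg z a \<phi>) =
     (if z = x then True else if z = y then x \<notin> FV \<phi> else admissible y x \<phi>)"
| "admissible y x (K X \<alpha>) = True"

text \<open>Propositional tautologies: valid under every assignment of truth values
  to the propositionally atomic subformulas (p_x, [x:=a]phi, K_X alpha).\<close>
fun peval :: "(('p, 'v, 'a) fm \<Rightarrow> bool) \<Rightarrow> ('p, 'v, 'a) fm \<Rightarrow> bool" where
  "peval v (P p x) = v (P p x)"
| "peval v Top = True"
| "peval v (Neg \<phi>) = (\<not> peval v \<phi>)"
| "peval v (And \<phi> \<psi>) = (peval v \<phi> \<and> peval v \<psi>)"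
| "peval v (Asg x a \<phi>) = v (Asg x a \<phi>)"
| "peval v (K X \<alpha>) = v (K X \<alpha>)"

definition taut :: "('p, 'v, 'a) fm \<Rightarrow> bool" where
  "taut \<phi> \<longleftrightarrow> (\<forall>v. peval v \<phi>)"

inductive derivable :: "('p, 'v, 'a) fm \<Rightarrow> bool" where
  ax_taut: "wff \<phi> \<Longrightarrow> taut \<phi> \<Longrightarrow> derivable \<phi>"
| ax_KK: "wff (Imp (K X (Imp \<alpha> \<beta>)) (Imp (K X \<alpha>) (K X \<beta>))) \<Longrightarrow>
    derivable (Imp (K X (Imp \<alpha> \<beta>)) (Imp (K X \<alpha>) (K X \<beta>)))"
| ax_mono: "X \<subseteq> Y \<Longrightarrow> wff (Imp (K X \<alpha>) (K Y \<alpha>)) \<Longrightarrow>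
    derivable (Imp (K X \<alpha>) (K Y \<alpha>))"
| ax_KA: "wff (Imp (Asg x a (Imp \<phi> \<psi>)) (Imp (Asg x a \<phi>) (Asg x a \<psi>))) \<Longrightarrow>
    derivable (Imp (Asg x a (Imp \<phi> \<psi>)) (Imp (Asg x a \<phi>) (Asg x a \<psi>)))"
| ax_func: "wff (Imp (Dia x a \<phi>) (Asg x a \<phi>)) \<Longrightarrow>
    derivable (Imp (Dia x a \<phi>) (Asg x a \<phi>))"
| ax_vac: "x \<notin> FV \<phi> \<Longrightarrow> wff (Imp \<phi> (Asg x a \<phi>)) \<Longrightarrow>
    derivable (Imp \<phi> (Asg x a \<phi>))"
| ax_sub: "admissible y x \<phi> \<Longrightarrow> wff (Asg y a (Imp (Asg x a \<phi>) (subst y x \<phi>))) \<Longrightarrow>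
    derivable (Asg y a (Imp (Asg x a \<phi>) (subst y x \<phi>)))"
| ax_comm: "x \<noteq> y \<Longrightarrow> wff (Imp (Asg x a (Asg y b \<phi>)) (Asg y b (Asg x a \<phi>))) \<Longrightarrow>
    derivable (Imp (Asg x a (Asg y b \<phi>)) (Asg y b (Asg x a \<phi>)))"
| ax_all: "set as = UNIV \<Longrightarrow> wff (Imp (Conj (map (\<lambda>a. Asg x a \<phi>) as)) \<phi>) \<Longrightarrow>
    derivable (Imp (Conj (map (\<lambda>a. Asg x a \<phi>) as)) \<phi>)"
| ax_T: "wff (Imp (K X \<alpha>) \<alpha>) \<Longrightarrow> derivable (Imp (K X \<alpha>) \<alpha>)"
| ax_neg_intro: "wff (Asgs zs (Imp (Neg (Kvec zs \<alpha>)) (Kvec zs (Asgs zs (Neg (Kvec zs \<alpha>)))))) \<Longrightarrow>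
    derivable (Asgs zs (Imp (Neg (Kvec zs \<alpha>)) (Kvec zs (Asgs zs (Neg (Kvec zs \<alpha>))))))"
| ax_exist: "wff (Asg x a (K {x} (Dia x a (Top :: ('p, 'v, 'a) fm)))) \<Longrightarrow>
    derivable (Asg x a (K {x} (Dia x a (Top :: ('p, 'v, 'a) fm))))"
| ax_pred: "wff (Asg x a (Imp (P p x) (K {x} (Asg x a (P p x))))) \<Longrightarrow>
    derivable (Asg x a (Imp (P p x) (K {x} (Asg x a (P p x)))))"
| ax_bot: "set bs = UNIV - set (map snd zs) \<Longrightarrow>
    wff (Asgs zs (Imp (Conj (map (\<lambda>b. Asg x b (Bot :: ('p, 'v, 'a) fm)) bs)) (Kvec zs (Conj (map (\<lambda>b. Asg x b (Bot :: ('p, 'v, 'a) fm)) bs))))) \<Longrightarrow>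
    derivable (Asgs zs (Imp (Conj (map (\<lambda>b. Asg x b (Bot :: ('p, 'v, 'a) fm)) bs)) (Kvec zs (Conj (map (\<lambda>b. Asg x b (Bot :: ('p, 'v, 'a) fm)) bs)))))"
| mp: "derivable (Imp \<phi> \<psi>) \<Longrightarrow> derivable \<phi> \<Longrightarrow> derivable \<psi>"
| nec_K: "sentence \<alpha> \<Longrightarrow> derivable \<alpha> \<Longrightarrow> derivable (K {} \<alpha>)"
| nec_A: "derivable \<phi> \<Longrightarrow> derivable (Asg x a \<phi>)"

text \<open>phi!(A), for phi with free variables among {x}.\<close>
definition Bang :: "'v \<Rightarrow> ('p, 'v, 'a::finite) fm \<Rightarrow> 'a set \<Rightarrow> ('p, 'v, 'a) fm" where
  "Bang x \<phi> A = And (ConjSet (\<lambda>a. Dia x a \<phi>) A) (ConjSet (\<lambda>b. Asg x b (Neg \<phi>)) (UNIV - A))"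

definition valid_choice :: "('a::finite set \<Rightarrow> ('v \<times> 'a) list) \<Rightarrow> bool" where
  "valid_choice ch \<longleftrightarrow> (\<forall>A. distinct (map snd (ch A)) \<and> set (map snd (ch A)) = A
                              \<and> distinct (map fst (ch A)))"

definition Kphi :: "('a::finite set \<Rightarrow> ('v \<times> 'a) list) \<Rightarrow> 'v \<Rightarrow> ('p, 'v, 'a) fm
    \<Rightarrow> ('p, 'v, 'a) fm \<Rightarrow> ('p, 'v, 'a) fm" where
  "Kphi ch x \<phi> \<alpha> = ConjSet (\<lambda>A. Imp (Bang x \<phi> A) (Asgs (ch A) (Kvec (ch A) \<alpha>))) (Pow UNIV)"

inductive chi_form :: "'v \<Rightarrow> ('p, 'v, 'a) fm \<Rightarrow> bool" for x where
  "chi_form x (P p x)"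
| "sentence \<alpha> \<Longrightarrow> chi_form x (K {x} \<alpha>)"
| "chi_form x \<chi> \<Longrightarrow> chi_form x (Neg \<chi>)"
| "chi_form x \<chi> \<Longrightarrow> chi_form x \<psi> \<Longrightarrow> chi_form x (And \<chi> \<psi>)"

end

theory Submission
  imports Defs
begin

text \<open>
  Fix a set \<open>B\<close> of agents, enumerated as \<open>x\<^sub>i := a\<^sub>i\<close> by the listing choice, and assume
  \<open>K\<^sub>\<chi> \<beta>\<close> and \<open>\<chi>!(B)\<close>. Then \<open>D = [x\<^sub>i := a\<^sub>i] K\<^sub>x\<^sub>i \<beta>\<close> holds, as does
  \<open>\<langle>x := a\<rangle>\<chi>\<close> for every \<open>a \<in> B\<close>. Each of these formulas \<open>\<phi>\<close> is introspective,
  \<open>\<phi> \<rightarrow> [x\<^sub>i := a\<^sub>i] K\<^sub>x\<^sub>i \<phi>\<close>: for \<open>D\<close> this is positive introspection, which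
  follows from negative introspection; for \<open>\<langle>x := a\<rangle>\<chi>\<close> it follows from the rigidity
  \<open>[x := a](\<chi> \<rightarrow> K\<^sub>x [x := a]\<chi>)\<close> of \<open>\<chi>\<close> and \<open>\<not>\<chi>\<close>, proved by induction on \<open>\<chi>\<close>.
  Introspective formulas are closed under conjunction, and whatever they imply is known.
  Their conjunction implies \<open>K\<^sub>\<chi> \<beta>\<close>: if \<open>\<chi>!(C)\<close> then \<open>B \<subseteq> C\<close>, and \<open>D\<close> implies
  the corresponding formula for \<open>C\<close> by renaming bound variables and adding vacuous
  assignments. Hence \<open>K\<^sub>\<chi> \<beta> \<and> \<chi>!(B) \<rightarrow> [x\<^sub>i := a\<^sub>i] K\<^sub>x\<^sub>i K\<^sub>\<chi> \<beta>\<close> for every \<open>B\<close>,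
  which is \<open>K\<^sub>\<chi> \<beta> \<rightarrow> K\<^sub>\<chi> K\<^sub>\<chi> \<beta>\<close>.
\<close>

lemma derivable_wff: "derivable \<phi> \<Longrightarrow> wff \<phi>"
  by (induction rule: derivable.induct) (auto simp: Imp_def sentence_def)

fun Imps :: "('p, 'v, 'a) fm list \<Rightarrow> ('p, 'v, 'a) fm \<Rightarrow> ('p, 'v, 'a) fm" where
  "Imps [] \<psi> = \<psi>"
| "Imps (\<gamma> # \<Gamma>) \<psi> = Imp \<gamma> (Imps \<Gamma> \<psi>)"

lemma wff_Imp [simp]: "wff (Imp \<phi> \<psi>) = (wff \<phi> \<and> wff \<psi>)"
  by (simp add: Imp_def)
lemma FV_Imp [simp]: "FV (Imp \<phi> \<psi>) = FV \<phi> \<union> FV \<psi>"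
  by (simp add: Imp_def)
lemma peval_Imp [simp]: "peval v (Imp \<phi> \<psi>) = (peval v \<phi> \<longrightarrow> peval v \<psi>)"
  by (simp add: Imp_def)

lemma wff_Dia [simp]: "wff (Dia x a \<phi>) = wff \<phi>"
  by (simp add: Dia_def)
lemma FV_Dia [simp]: "FV (Dia x a \<phi>) = FV \<phi> - {x}"
  by (simp add: Dia_def)

lemma wff_Imps [simp]: "wff (Imps \<Gamma> \<psi>) = ((\<forall>\<gamma>\<in>set \<Gamma>. wff \<gamma>) \<and> wff \<psi>)"
  by (induction \<Gamma>) auto
lemma FV_Imps [simp]: "FV (Imps \<Gamma> \<psi>) = (\<Union>\<gamma>\<in>set \<Gamma>. FV \<gamma>) \<union> FV \<psi>"
  by (induction \<Gamma>) auto
lemma peval_Imps [simp]: "peval v (Imps \<Gamma> \<psi>) = ((\<forall>\<gamma>\<in>set \<Gamma>. peval v \<gamma>) \<longrightarrow> peval v \<psi>)"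
  by (induction \<Gamma>) auto

lemma wff_Conj [simp]: "wff (Conj \<Gamma>) = (\<forall>\<gamma>\<in>set \<Gamma>. wff \<gamma>)"
  by (induction \<Gamma>) auto
lemma FV_Conj [simp]: "FV (Conj \<Gamma>) = (\<Union>\<gamma>\<in>set \<Gamma>. FV \<gamma>)"
  by (induction \<Gamma>) auto
lemma peval_Conj [simp]: "peval v (Conj \<Gamma>) = (\<forall>\<gamma>\<in>set \<Gamma>. peval v \<gamma>)"
  by (induction \<Gamma>) auto

lemma set_ConjSet_enumeration:
  "finite I \<Longrightarrow> set (SOME xs. set xs = I \<and> distinct xs) = I"
  by (metis (mono_tags, lifting) finite_distinct_list someI_ex)

lemma wff_ConjSet [simp]: "finite I \<Longrightarrow> wff (ConjSet f I) = (\<forall>i\<in>I. wff (f i))"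
  by (simp add: ConjSet_def set_ConjSet_enumeration)
lemma FV_ConjSet [simp]: "finite I \<Longrightarrow> FV (ConjSet f I) = (\<Union>i\<in>I. FV (f i))"
  by (simp add: ConjSet_def set_ConjSet_enumeration)
lemma peval_ConjSet [simp]: "finite I \<Longrightarrow> peval v (ConjSet f I) = (\<forall>i\<in>I. peval v (f i))"
  by (simp add: ConjSet_def set_ConjSet_enumeration)

lemma Asgs_Nil [simp]: "Asgs [] = (\<lambda>\<phi>. \<phi>)"
  by (simp add: Asgs_def fun_eq_iff)
lemma Asgs_Cons [simp]: "Asgs ((x, a) # S) \<phi> = Asg x a (Asgs S \<phi>)"
  by (simp add: Asgs_def)
lemma Asgs_append [simp]: "Asgs (S @ R) \<phi> = Asgs S (Asgs R \<phi>)"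
  by (simp add: Asgs_def)
lemma wff_Asgs [simp]: "wff (Asgs S \<phi>) = wff \<phi>"
  by (induction S) auto
lemma FV_Asgs [simp]: "FV (Asgs S \<phi>) = FV \<phi> - fst ` set S"
  by (induction S) auto

lemma Kvec_eq [simp]: "Kvec S \<alpha> = K (fst ` set S) \<alpha>"
  by (simp add: Kvec_def)

lemma taut_consequence:
  assumes "finite \<Gamma>" and "\<forall>\<gamma>\<in>\<Gamma>. derivable \<gamma>" and "wff \<psi>"
    and "\<forall>v. (\<forall>\<gamma>\<in>\<Gamma>. peval v \<gamma>) \<longrightarrow> peval v \<psi>"
  shows "derivable \<psi>"
proof -
  obtain l where "set l = \<Gamma>"
    using assms(1) finite_list by blast
  with assms(2-) show ?thesis
  proof (induction l arbitrary: \<Gamma> \<psi>)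
    case Nil
    then show ?case by (auto intro: ax_taut simp: taut_def)
  next
    case (Cons \<gamma> l)
    have "derivable (Imp \<gamma> \<psi>)"
      using Cons.prems by (intro Cons.IH[of "set l"]) (auto dest: derivable_wff)
    with Cons.prems show ?case by (auto intro: mp)
  qed
qed

lemma imp_trans: "derivable (Imp \<phi> \<psi>) \<Longrightarrow> derivable (Imp \<psi> \<theta>) \<Longrightarrow> derivable (Imp \<phi> \<theta>)"
  by (rule taut_consequence[of "{Imp \<phi> \<psi>, Imp \<psi> \<theta>}"]) (auto dest: derivable_wff)

lemma Asg_Imps_dist:
  "wff (Imps \<Gamma> \<psi>) \<Longrightarrow>
    derivable (Imp (Asg x a (Imps \<Gamma> \<psi>)) (Imps (map (Asg x a) \<Gamma>) (Asg x a \<psi>)))"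
proof (induction \<Gamma>)
  case Nil
  then show ?case by (intro taut_consequence[of "{}"]) auto
next
  case (Cons \<gamma> \<Gamma>)
  have "derivable (Imp (Asg x a (Imp \<gamma> (Imps \<Gamma> \<psi>))) (Imp (Asg x a \<gamma>) (Asg x a (Imps \<Gamma> \<psi>))))"
    using Cons.prems by (intro ax_KA) simp
  with Cons show ?case
    by (intro taut_consequence[of
        "{Imp (Asg x a (Imp \<gamma> (Imps \<Gamma> \<psi>))) (Imp (Asg x a \<gamma>) (Asg x a (Imps \<Gamma> \<psi>))),
          Imp (Asg x a (Imps \<Gamma> \<psi>)) (Imps (map (Asg x a) \<Gamma>) (Asg x a \<psi>))}"]) auto
qed

lemma Asgs_monoL: "derivable (Imps \<Gamma> \<psi>) \<Longrightarrow> derivable (Imps (map (Asgs S) \<Gamma>) (Asgs S \<psi>))"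
proof (induction S)
  case (Cons p S)
  obtain x a where p: "p = (x, a)" by fastforce
  note IH = Cons.IH[OF Cons.prems]
  show ?case
    using mp[OF Asg_Imps_dist[OF derivable_wff[OF IH]] nec_A[OF IH]] by (simp add: p comp_def)
qed simp

lemma Asgs_mono: "derivable (Imp \<phi> \<psi>) \<Longrightarrow> derivable (Imp (Asgs S \<phi>) (Asgs S \<psi>))"
  using Asgs_monoL[of "[\<phi>]"] by simp

lemma Asgs_nec: "derivable \<phi> \<Longrightarrow> derivable (Asgs S \<phi>)"
  using Asgs_monoL[of "[]"] by simp

lemma Asgs_taut_consequence:
  assumes "finite \<Gamma>" and "\<forall>\<gamma>\<in>\<Gamma>. derivable (Asgs S \<gamma>)" and "wff \<psi>"
    and "\<forall>v. (\<forall>\<gamma>\<in>\<Gamma>. peval v \<gamma>) \<longrightarrow> peval v \<psi>"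
  shows "derivable (Asgs S \<psi>)"
proof -
  obtain l where l: "set l = \<Gamma>"
    using assms(1) finite_list by blast
  have "\<forall>\<gamma>\<in>\<Gamma>. wff \<gamma>"
    using assms(2) derivable_wff by fastforce
  then have "derivable (Imps l \<psi>)"
    using assms(3,4) l by (intro taut_consequence[of "{}"]) auto
  then have "derivable (Imps (map (Asgs S) l) (Asgs S \<psi>))"
    by (rule Asgs_monoL)
  with assms(1,2) l show ?thesis
    by (intro taut_consequence[of "insert (Imps (map (Asgs S) l) (Asgs S \<psi>)) (Asgs S ` \<Gamma>)"])
      (auto dest: derivable_wff)
qed

lemma Asg_taut_consequence:
  assumes "finite \<Gamma>" and "\<forall>\<gamma>\<in>\<Gamma>. derivable (Asg x a \<gamma>)" and "wff \<psi>"
    and "\<forall>v. (\<forall>\<gamma>\<in>\<Gamma>. peval v \<gamma>) \<longrightarrow> peval v \<psi>"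
  shows "derivable (Asg x a \<psi>)"
  using Asgs_taut_consequence[of \<Gamma> "[(x, a)]" \<psi>] assms by simp

lemma Asgs_distrib: "derivable (Asgs S (Imp \<phi> \<psi>)) \<Longrightarrow> derivable (Imp (Asgs S \<phi>) (Asgs S \<psi>))"
  using mp Asgs_monoL[of "[Imp \<phi> \<psi>, \<phi>]" \<psi> S] taut_consequence[of "{}" "Imps [Imp \<phi> \<psi>, \<phi>] \<psi>"]
  by (fastforce dest: derivable_wff)

lemma K_nec: "sentence \<alpha> \<Longrightarrow> finite X \<Longrightarrow> derivable \<alpha> \<Longrightarrow> derivable (K X \<alpha>)"
  by (rule mp[OF ax_mono[of "{}" X \<alpha>]]) (auto simp: sentence_def intro: nec_K)

lemma K_Imps_dist:
  "wff (Imps \<Gamma> \<psi>) \<Longrightarrow> FV (Imps \<Gamma> \<psi>) = {} \<Longrightarrow> finite X \<Longrightarrow>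
    derivable (Imp (K X (Imps \<Gamma> \<psi>)) (Imps (map (K X) \<Gamma>) (K X \<psi>)))"
proof (induction \<Gamma>)
  case Nil
  then show ?case by (intro taut_consequence[of "{}"]) auto
next
  case (Cons \<gamma> \<Gamma>)
  have "derivable (Imp (K X (Imp \<gamma> (Imps \<Gamma> \<psi>))) (Imp (K X \<gamma>) (K X (Imps \<Gamma> \<psi>))))"
    using Cons.prems by (intro ax_KK) simp
  with Cons show ?case
    by (intro taut_consequence[of
        "{Imp (K X (Imp \<gamma> (Imps \<Gamma> \<psi>))) (Imp (K X \<gamma>) (K X (Imps \<Gamma> \<psi>))),
          Imp (K X (Imps \<Gamma> \<psi>)) (Imps (map (K X) \<Gamma>) (K X \<psi>))}"]) auto
qed

lemma K_monoL:
  "derivable (Imps \<Gamma> \<psi>) \<Longrightarrow> FV (Imps \<Gamma> \<psi>) = {} \<Longrightarrow> finite X \<Longrightarrow>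
    derivable (Imps (map (K X) \<Gamma>) (K X \<psi>))"
  using derivable_wff[of "Imps \<Gamma> \<psi>"]
  by (intro mp[OF K_Imps_dist K_nec]) (auto simp: sentence_def)

lemma K_mono:
  "derivable (Imp \<phi> \<psi>) \<Longrightarrow> FV \<phi> = {} \<Longrightarrow> FV \<psi> = {} \<Longrightarrow> finite X \<Longrightarrow>
    derivable (Imp (K X \<phi>) (K X \<psi>))"
  using K_monoL[of "[\<phi>]" \<psi> X] by simp

lemma Asgs_vac: "wff \<phi> \<Longrightarrow> FV \<phi> \<inter> fst ` set S = {} \<Longrightarrow> derivable (Imp \<phi> (Asgs S \<phi>))"
proof (induction S)
  case Nil
  then show ?case by (intro taut_consequence[of "{}"]) auto
next
  case (Cons p S)
  obtain x a where p: "p = (x, a)" by fastforce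
  have "derivable (Imp \<phi> (Asg x a \<phi>))"
    using Cons.prems p by (intro ax_vac) auto
  moreover have "derivable (Imp (Asg x a \<phi>) (Asg x a (Asgs S \<phi>)))"
    using Asgs_mono[OF Cons.IH, of "[(x, a)]"] Cons.prems by auto
  ultimately show ?case by (simp add: p imp_trans)
qed

lemma subst_self [simp]: "subst x x \<phi> = \<phi>"
  by (induction \<phi>) auto

lemma admissible_self [simp]: "admissible x x \<phi>"
  by (induction \<phi>) auto

lemma wff_subst [simp]: "wff (subst y x \<phi>) = wff \<phi>"
  by (induction \<phi>) auto

lemma Asg_sub_self: "wff \<phi> \<Longrightarrow> derivable (Asg x a (Imp (Asg x a \<phi>) \<phi>))"
  using ax_sub[of x x \<phi> a] by simp

lemma Asgs_sub_self: "wff \<phi> \<Longrightarrow> derivable (Asgs S (Imp (Asgs S \<phi>) \<phi>))"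
proof (induction S)
  case Nil
  then show ?case by (intro taut_consequence[of "{}"]) auto
next
  case (Cons p S)
  obtain x a where p: "p = (x, a)" by fastforce
  define \<psi> where "\<psi> = Asgs S \<phi>"
  have "wff \<psi>" "FV \<psi> \<inter> fst ` set S = {}"
    using Cons.prems by (auto simp: \<psi>_def)
  then have "derivable (Imp (Imp (Asg x a \<psi>) \<psi>) (Asgs S (Imp (Asg x a \<psi>) \<psi>)))"
    by (intro Asgs_vac) auto
  then have "derivable (Asg x a (Asgs S (Imp (Asg x a \<psi>) \<psi>)))"
    using mp Asgs_mono[of _ _ "[(x, a)]"] Asg_sub_self[OF \<open>wff \<psi>\<close>] by fastforce
  moreover have "derivable (Asg x a (Asgs S (Imp \<psi> \<phi>)))"
    using Cons by (simp add: \<psi>_def nec_A)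
  ultimately show ?case
    using Asgs_taut_consequence[of "{Imp \<psi> \<phi>, Imp (Asg x a \<psi>) \<psi>}" "(x, a) # S"] Cons.prems
    by (auto simp: p \<psi>_def)
qed

lemma Asg_rename:
  assumes "admissible y x \<phi>" and "y \<notin> FV \<phi> - {x}" and "wff \<phi>"
  shows "derivable (Imp (Asg x a \<phi>) (Asg y a (subst y x \<phi>)))"
proof -
  have "derivable (Imp (Asg x a \<phi>) (Asg y a (Asg x a \<phi>)))"
    using assms by (intro ax_vac) auto
  moreover have "derivable (Asg y a (Imp (Asg x a \<phi>) (subst y x \<phi>)))"
    using assms by (intro ax_sub) auto
  ultimately show ?thesis
    using Asgs_distrib[of "[(y, a)]"] imp_trans by fastforce
qed

lemma Asgs_of_Asg:
  "distinct (map fst S) \<Longrightarrow> (y, a) \<in> set S \<Longrightarrow> FV \<phi> \<subseteq> {y} \<Longrightarrow>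
    derivable (Asg y a \<phi>) \<Longrightarrow> derivable (Asgs S \<phi>)"
proof (induction S)
  case (Cons p S)
  show ?case
  proof (cases "p = (y, a)")
    case True
    with Cons.prems have "derivable (Imp \<phi> (Asgs S \<phi>))"
      by (intro Asgs_vac) (auto dest: derivable_wff)
    with Cons.prems True show ?thesis
      using mp Asgs_mono[of _ _ "[(y, a)]"] by fastforce
  next
    case False
    with Cons obtain x b where "p = (x, b)" "derivable (Asgs S \<phi>)" by fastforce
    then show ?thesis by (simp add: nec_A)
  qed
qed simp

text \<open>Positive introspection, derived from two instances of the negative introspection axiom.\<close>
lemma Asgs_Kvec_introspection:
  assumes "sentence \<beta>"
  shows "derivable (Asgs S (Imp (Kvec S \<beta>) (Kvec S (Asgs S (Kvec S \<beta>)))))"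
proof -
  define V where "V = fst ` set S"
  define k where "k = K V \<beta>"
  define N where "N = Asgs S (Neg k)"
  define M where "M = Asgs S (Neg (K V N))"
  have "finite V" by (simp add: V_def)
  have k: "wff k" "FV k = V"
    using assms \<open>finite V\<close> by (auto simp: k_def sentence_def)
  then have NM: "wff N" "FV N = {}" "wff M" "FV M = {}"
    using \<open>finite V\<close> by (auto simp: N_def M_def V_def)
  have neg_k: "derivable (Asgs S (Imp (Neg k) (K V N)))"
    using ax_neg_intro[of S \<beta>] assms by (simp add: sentence_def k_def N_def V_def)
  have neg_KN: "derivable (Asgs S (Imp (Neg (K V N)) (K V M)))"
    using ax_neg_intro[of S N] NM by (simp add: M_def V_def)
  have N_neg_k: "derivable (Asgs S (Imp N (Neg k)))"
    using Asgs_sub_self[of "Neg k" S] k by (simp add: N_def)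
  have KN_N: "derivable (Asgs S (Imp (K V N) N))"
    using NM \<open>finite V\<close> by (intro Asgs_nec ax_T) simp
  have "derivable (Imps [Imp (Neg k) (K V N), Neg (K V N)] k)"
    using NM k \<open>finite V\<close> by (intro taut_consequence[of "{}"]) auto
  then have "derivable (Imp (Asgs S (Imp (Neg k) (K V N))) (Imp M (Asgs S k)))"
    using Asgs_monoL by (fastforce simp: M_def)
  then have "derivable (Imp M (Asgs S k))"
    using mp neg_k by blast
  then have KM_KD: "derivable (Asgs S (Imp (K V M) (K V (Asgs S k))))"
    using NM k \<open>finite V\<close> by (intro Asgs_nec K_mono) (auto simp: V_def)
  \<comment> \<open>\<open>K V N\<close> would give \<open>N\<close> and thus \<open>\<not> k\<close>; otherwise \<open>K V M\<close>, and \<open>M\<close> implies \<open>Asgs S k\<close>.\<close>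
  have "derivable (Asgs S (Imp k (K V (Asgs S k))))"
    using neg_k neg_KN N_neg_k KN_N KM_KD NM k \<open>finite V\<close>
    by (intro Asgs_taut_consequence[of "{Imp (K V N) N, Imp N (Neg k), Imp (Neg (K V N)) (K V M),
        Imp (K V M) (K V (Asgs S k))}"]) (auto simp: V_def)
  then show ?thesis by (simp add: k_def V_def)
qed

definition rigid :: "'v \<Rightarrow> 'a \<Rightarrow> ('p, 'v, 'a) fm \<Rightarrow> bool" where
  "rigid x a \<phi> \<longleftrightarrow> derivable (Asg x a (Imp \<phi> (K {x} (Asg x a \<phi>))))"

lemma rigid_wff: "rigid x a \<phi> \<Longrightarrow> wff \<phi> \<and> FV \<phi> \<subseteq> {x}"
  by (auto simp: rigid_def dest!: derivable_wff)

lemma rigid_P: "rigid x a (P p x)"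
  unfolding rigid_def by (intro ax_pred) simp

lemma rigid_K: "sentence \<alpha> \<Longrightarrow> rigid x a (K {x} \<alpha>)"
  using Asgs_Kvec_introspection[of \<alpha> "[(x, a)]"] by (simp add: rigid_def)

lemma rigid_Neg_K: "sentence \<alpha> \<Longrightarrow> rigid x a (Neg (K {x} \<alpha>))"
  using ax_neg_intro[of "[(x, a)]" \<alpha>] by (simp add: rigid_def sentence_def)

lemma rigid_imp:
  assumes "rigid x a \<phi>" and "derivable (Asg x a (Imp \<phi> \<psi>))" and "FV \<psi> \<subseteq> {x}"
  shows "derivable (Asg x a (Imp \<phi> (K {x} (Asg x a \<psi>))))"
proof -
  have "derivable (Imp (Asg x a \<phi>) (Asg x a \<psi>))"
    using Asgs_distrib[of "[(x, a)]"] assms(2) by simp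
  then have "derivable (Asg x a (Imp (K {x} (Asg x a \<phi>)) (K {x} (Asg x a \<psi>))))"
    using rigid_wff[OF assms(1)] assms(3) by (intro nec_A K_mono) auto
  with assms show ?thesis
    by (intro Asg_taut_consequence[of "{Imp \<phi> (K {x} (Asg x a \<phi>)),
        Imp (K {x} (Asg x a \<phi>)) (K {x} (Asg x a \<psi>))}"])
      (auto simp: rigid_def dest: derivable_wff)
qed

lemma rigid_Neg_P: "rigid x a (Neg (P p x))"
proof -
  define \<alpha> where "\<alpha> = Asg x a (P p x)"
  have p_K: "derivable (Asg x a (Imp (P p x) (K {x} \<alpha>)))"
    unfolding \<alpha>_def by (intro ax_pred) simp
  have "derivable (Asg x a (Imp (K {x} \<alpha>) \<alpha>))" "derivable (Asg x a (Imp \<alpha> (P p x)))"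
    unfolding \<alpha>_def by (intro nec_A ax_T Asg_sub_self; simp)+
  then have K_p: "derivable (Asg x a (Imp (K {x} \<alpha>) (P p x)))"
    by (intro Asg_taut_consequence[of "{Imp (K {x} \<alpha>) \<alpha>, Imp \<alpha> (P p x)}"])
      (auto simp: \<alpha>_def)
  have "derivable (Asg x a (Imp (Neg (K {x} \<alpha>)) (Neg (P p x))))"
    using p_K by (intro Asg_taut_consequence[of "{Imp (P p x) (K {x} \<alpha>)}"])
      (auto simp: \<alpha>_def)
  then have "derivable (Asg x a (Imp (Neg (K {x} \<alpha>)) (K {x} (Asg x a (Neg (P p x))))))"
    by (intro rigid_imp rigid_Neg_K) (auto simp: \<alpha>_def sentence_def)
  with K_p show ?thesis
    unfolding rigid_def
    by (intro Asg_taut_consequence[of "{Imp (K {x} \<alpha>) (P p x),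
        Imp (Neg (K {x} \<alpha>)) (K {x} (Asg x a (Neg (P p x))))}"])
      (auto simp: \<alpha>_def)
qed

lemma rigid_Neg_Neg:
  assumes "rigid x a \<phi>"
  shows "rigid x a (Neg (Neg \<phi>))"
proof -
  have \<phi>: "wff \<phi>" "FV \<phi> \<subseteq> {x}"
    using rigid_wff[OF assms] by auto
  then have "derivable (Asg x a (Imp \<phi> (Neg (Neg \<phi>))))"
    by (intro nec_A ax_taut) (auto simp: taut_def)
  then have "derivable (Asg x a (Imp \<phi> (K {x} (Asg x a (Neg (Neg \<phi>))))))"
    using assms \<phi> by (intro rigid_imp) auto
  with \<phi> show ?thesis
    unfolding rigid_def
    by (intro Asg_taut_consequence[of "{Imp \<phi> (K {x} (Asg x a (Neg (Neg \<phi>))))}"])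
      auto
qed

lemma rigid_Neg_And:
  assumes "rigid x a (Neg \<phi>)" and "rigid x a (Neg \<psi>)"
  shows "rigid x a (Neg (And \<phi> \<psi>))"
proof -
  have \<phi>\<psi>: "wff \<phi>" "FV \<phi> \<subseteq> {x}" "wff \<psi>" "FV \<psi> \<subseteq> {x}"
    using rigid_wff[OF assms(1)] rigid_wff[OF assms(2)] by auto
  have "derivable (Asg x a (Imp (Neg \<phi>) (Neg (And \<phi> \<psi>))))"
    "derivable (Asg x a (Imp (Neg \<psi>) (Neg (And \<phi> \<psi>))))"
    using \<phi>\<psi> by (intro nec_A ax_taut; auto simp: taut_def)+
  then have "derivable (Asg x a (Imp (Neg \<phi>) (K {x} (Asg x a (Neg (And \<phi> \<psi>))))))"
    "derivable (Asg x a (Imp (Neg \<psi>) (K {x} (Asg x a (Neg (And \<phi> \<psi>))))))"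
    using assms \<phi>\<psi> by (intro rigid_imp; auto)+
  with \<phi>\<psi> show ?thesis
    unfolding rigid_def
    by (intro Asg_taut_consequence[of "{Imp (Neg \<phi>) (K {x} (Asg x a (Neg (And \<phi> \<psi>)))),
        Imp (Neg \<psi>) (K {x} (Asg x a (Neg (And \<phi> \<psi>))))}"]) auto
qed

lemma rigid_And:
  assumes "rigid x a \<phi>" and "rigid x a \<psi>"
  shows "rigid x a (And \<phi> \<psi>)"
proof -
  have \<phi>\<psi>: "wff \<phi>" "FV \<phi> \<subseteq> {x}" "wff \<psi>" "FV \<psi> \<subseteq> {x}"
    using rigid_wff[OF assms(1)] rigid_wff[OF assms(2)] by auto
  then have "derivable (Imps [\<phi>, \<psi>] (And \<phi> \<psi>))"
    by (intro ax_taut) (auto simp: taut_def)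
  then have "derivable (Imps [Asg x a \<phi>, Asg x a \<psi>] (Asg x a (And \<phi> \<psi>)))"
    using Asgs_monoL[of _ _ "[(x, a)]"] by fastforce
  then have "derivable (Asg x a (Imps [K {x} (Asg x a \<phi>), K {x} (Asg x a \<psi>)]
      (K {x} (Asg x a (And \<phi> \<psi>)))))"
    using \<phi>\<psi> K_monoL[of "[Asg x a \<phi>, Asg x a \<psi>]" _ "{x}"] by (intro nec_A) auto
  with assms \<phi>\<psi> show ?thesis
    unfolding rigid_def
    by (intro Asg_taut_consequence[of "{Imp \<phi> (K {x} (Asg x a \<phi>)), Imp \<psi> (K {x} (Asg x a \<psi>)),
        Imps [K {x} (Asg x a \<phi>), K {x} (Asg x a \<psi>)] (K {x} (Asg x a (And \<phi> \<psi>)))}"])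
      auto
qed

lemma chi_form_rigid: "chi_form x \<chi> \<Longrightarrow> rigid x a \<chi> \<and> rigid x a (Neg \<chi>)"
  by (induction rule: chi_form.induct)
    (auto intro: rigid_P rigid_Neg_P rigid_K rigid_Neg_K rigid_Neg_Neg rigid_And rigid_Neg_And)

lemma Dia_imp_Asg_K_Dia:
  assumes "rigid x a \<chi>"
  shows "derivable (Imp (Dia x a \<chi>) (Asg x a (K {x} (Dia x a \<chi>))))"
proof -
  define \<theta> where "\<theta> = Dia x a \<chi>"
  have \<chi>: "wff \<chi>" "FV \<chi> \<subseteq> {x}"
    using rigid_wff[OF assms] by auto
  have \<theta>_\<chi>: "derivable (Imp \<theta> (Asg x a \<chi>))"
    unfolding \<theta>_def using \<chi> by (intro ax_func) simp
  have \<chi>_K\<chi>: "derivable (Imp (Asg x a \<chi>) (Asg x a (K {x} (Asg x a \<chi>))))"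
    using assms Asgs_distrib[of "[(x, a)]"] by (simp add: rigid_def)
  \<comment> \<open>The existence axiom turns \<open>K {x} (Asg x a \<chi>)\<close> into \<open>K {x} \<theta>\<close>.\<close>
  have exist: "derivable (Asg x a (K {x} (Dia x a Top)))"
    by (intro ax_exist) simp
  have "derivable (Imps [\<chi>, Neg \<chi>] (Neg Top))"
    using \<chi> by (intro ax_taut) (auto simp: taut_def)
  then have "derivable (Imps [Asg x a \<chi>, Asg x a (Neg \<chi>)] (Asg x a (Neg Top)))"
    using Asgs_monoL[of _ _ "[(x, a)]"] by fastforce
  then have "derivable (Imps [Asg x a \<chi>, Dia x a Top] \<theta>)"
    using \<chi>
    by (intro taut_consequence[of "{Imps [Asg x a \<chi>, Asg x a (Neg \<chi>)] (Asg x a (Neg Top))}"])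
      (auto simp: \<theta>_def Dia_def)
  then have "derivable (Imps [K {x} (Asg x a \<chi>), K {x} (Dia x a Top)] (K {x} \<theta>))"
    using \<chi> K_monoL[of "[Asg x a \<chi>, Dia x a Top]" \<theta> "{x}"] by (auto simp: \<theta>_def)
  then have "derivable (Imps [Asg x a (K {x} (Asg x a \<chi>)), Asg x a (K {x} (Dia x a Top))]
      (Asg x a (K {x} \<theta>)))"
    using Asgs_monoL[of _ _ "[(x, a)]"] by fastforce
  with \<theta>_\<chi> \<chi>_K\<chi> exist show ?thesis
    unfolding \<theta>_def[symmetric]
    by (intro taut_consequence[of
        "{Imp \<theta> (Asg x a \<chi>), Imp (Asg x a \<chi>) (Asg x a (K {x} (Asg x a \<chi>))),
          Asg x a (K {x} (Dia x a Top)),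
          Imps [Asg x a (K {x} (Asg x a \<chi>)), Asg x a (K {x} (Dia x a Top))] (Asg x a (K {x} \<theta>))}"])
      (auto dest: derivable_wff)
qed

definition introspective :: "('v \<times> 'a) list \<Rightarrow> ('p, 'v, 'a) fm \<Rightarrow> bool" where
  "introspective S \<phi> \<longleftrightarrow> derivable (Imp \<phi> (Asgs S (Kvec S \<phi>)))"

lemma introspective_sentence: "introspective S \<phi> \<Longrightarrow> sentence \<phi>"
  by (auto simp: introspective_def sentence_def dest!: derivable_wff)

lemma introspective_imp:
  assumes "introspective S \<phi>" and "derivable (Imp \<phi> \<psi>)" and "FV \<psi> = {}"
  shows "derivable (Imp \<phi> (Asgs S (Kvec S \<psi>)))"
proof -
  have "derivable (Imp (Asgs S (Kvec S \<phi>)) (Asgs S (Kvec S \<psi>)))"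
    using introspective_sentence[OF assms(1)] assms(2,3)
    by (auto simp: sentence_def intro: Asgs_mono K_mono)
  with assms(1) show ?thesis
    unfolding introspective_def by (rule imp_trans)
qed

lemma introspective_Asgs_Kvec: "sentence \<beta> \<Longrightarrow> introspective S (Asgs S (Kvec S \<beta>))"
  unfolding introspective_def using Asgs_distrib[OF Asgs_Kvec_introspection] by simp

lemma introspective_Top: "introspective S Top"
proof -
  have "derivable (Asgs S (Kvec S Top))"
    unfolding Kvec_eq by (intro Asgs_nec K_nec ax_taut) (auto simp: sentence_def taut_def)
  then show ?thesis
    unfolding introspective_def
    by (intro taut_consequence[of "{Asgs S (Kvec S Top)}"]) (auto dest: derivable_wff)
qed

lemma introspective_And:
  assumes "introspective S \<phi>" and "introspective S \<psi>"
  shows "introspective S (And \<phi> \<psi>)"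
proof -
  have \<phi>\<psi>: "wff \<phi>" "FV \<phi> = {}" "wff \<psi>" "FV \<psi> = {}"
    using assms by (auto simp: sentence_def dest!: introspective_sentence)
  then have "derivable (Imps [\<phi>, \<psi>] (And \<phi> \<psi>))"
    by (intro ax_taut) (auto simp: taut_def)
  then have "derivable (Imps [Kvec S \<phi>, Kvec S \<psi>] (Kvec S (And \<phi> \<psi>)))"
    using \<phi>\<psi> K_monoL[of "[\<phi>, \<psi>]" _ "fst ` set S"] by simp
  then have "derivable (Imps [Asgs S (Kvec S \<phi>), Asgs S (Kvec S \<psi>)] (Asgs S (Kvec S (And \<phi> \<psi>))))"
    using Asgs_monoL[of "[Kvec S \<phi>, Kvec S \<psi>]"] by fastforce
  with assms \<phi>\<psi> show ?thesis
    unfolding introspective_def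
    by (intro taut_consequence[of "{Imp \<phi> (Asgs S (Kvec S \<phi>)), Imp \<psi> (Asgs S (Kvec S \<psi>)),
        Imps [Asgs S (Kvec S \<phi>), Asgs S (Kvec S \<psi>)] (Asgs S (Kvec S (And \<phi> \<psi>)))}"])
      auto
qed

lemma introspective_ConjSet:
  assumes "finite I" and "\<forall>i\<in>I. introspective S (f i)"
  shows "introspective S (ConjSet f I)"
proof -
  have Conj: "introspective S (Conj \<Phi>)" if "\<forall>\<phi>\<in>set \<Phi>. introspective S \<phi>" for \<Phi>
    using that by (induction \<Phi>) (auto intro: introspective_Top introspective_And)
  show ?thesis
    unfolding ConjSet_def using assms by (intro Conj) (simp add: set_ConjSet_enumeration)
qed

lemma introspective_Dia:
  assumes "rigid x a \<chi>" and "distinct (map fst S)" and "a \<in> snd ` set S"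
  shows "introspective S (Dia x a \<chi>)"
proof -
  obtain y where ya: "(y, a) \<in> set S"
    using assms(3) by force
  define \<theta> where "\<theta> = Dia x a \<chi>"
  define \<sigma> where "\<sigma> = Asg y a (K {y} \<theta>)"
  have \<theta>: "wff \<theta>" "FV \<theta> = {}" and \<sigma>: "wff \<sigma>" "FV \<sigma> = {}"
    using rigid_wff[OF assms(1)] by (auto simp: \<theta>_def \<sigma>_def)
  \<comment> \<open>Renaming \<open>x\<close> to \<open>y\<close> gives the sentence \<open>\<sigma>\<close>, which passes vacuously under \<open>S\<close>.\<close>
  have "derivable (Imp (Asg x a (K {x} \<theta>)) (Asg y a (subst y x (K {x} \<theta>))))"
    using \<theta> by (intro Asg_rename) auto
  then have \<theta>_\<sigma>: "derivable (Imp \<theta> \<sigma>)"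
    using imp_trans Dia_imp_Asg_K_Dia[OF assms(1)] by (fastforce simp: \<theta>_def \<sigma>_def)
  have \<sigma>_vac: "derivable (Imp \<sigma> (Asgs S \<sigma>))"
    using \<sigma> by (intro Asgs_vac) auto
  have "derivable (Asgs S (Imp \<sigma> (K {y} \<theta>)))"
    using assms(2) ya \<theta> Asg_sub_self[of "K {y} \<theta>" y a] by (intro Asgs_of_Asg) (auto simp: \<sigma>_def)
  moreover have "derivable (Asgs S (Imp (K {y} \<theta>) (Kvec S \<theta>)))"
    unfolding Kvec_eq using ya \<theta> by (intro Asgs_nec ax_mono) force+
  ultimately have "derivable (Asgs S (Imp \<sigma> (Kvec S \<theta>)))"
    using \<theta> \<sigma> by (intro Asgs_taut_consequence[of "{Imp \<sigma> (K {y} \<theta>), Imp (K {y} \<theta>) (Kvec S \<theta>)}"])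
      auto
  then have "derivable (Imp \<sigma> (Asgs S (Kvec S \<theta>)))"
    using \<sigma>_vac Asgs_distrib imp_trans by blast
  with \<theta>_\<sigma> show ?thesis
    unfolding introspective_def \<theta>_def[symmetric] by (rule imp_trans)
qed

text \<open>\<open>W\<close> holds the variables bound by an outer prefix of assignments; they also index \<open>K\<close>.\<close>
definition AsgsK :: "'v set \<Rightarrow> ('v \<times> 'a) list \<Rightarrow> ('p, 'v, 'a) fm \<Rightarrow> ('p, 'v, 'a) fm" where
  "AsgsK W S \<beta> = Asgs S (K (W \<union> fst ` set S) \<beta>)"

definition proper_asgs :: "'v set \<Rightarrow> ('v \<times> 'a) list \<Rightarrow> bool" where
  "proper_asgs W S \<longleftrightarrow> distinct (map fst S) \<and> distinct (map snd S) \<and> W \<inter> fst ` set S = {}"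

lemma AsgsK_Cons [simp]: "AsgsK W ((w, a) # S) \<beta> = Asg w a (AsgsK (insert w W) S \<beta>)"
  by (simp add: AsgsK_def Un_insert_left Un_insert_right)

lemma AsgsK_Nil_Kvec: "AsgsK {} S \<beta> = Asgs S (Kvec S \<beta>)"
  by (simp add: AsgsK_def)

lemma wff_AsgsK [simp]: "finite W \<Longrightarrow> sentence \<beta> \<Longrightarrow> wff (AsgsK W S \<beta>)"
  by (simp add: AsgsK_def sentence_def)

lemma proper_asgs_Cons [simp]:
  "proper_asgs W ((w, a) # S) \<longleftrightarrow>
    w \<notin> W \<and> a \<notin> snd ` set S \<and> proper_asgs (insert w W) S"
  by (auto simp: proper_asgs_def)

lemma proper_asgs_eq_iff:
  "proper_asgs W S \<Longrightarrow> (y, c) \<in> set S \<Longrightarrow> (y', c') \<in> set S \<Longrightarrow> y = y' \<longleftrightarrow> c = c'"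
  unfolding proper_asgs_def distinct_map inj_on_def by force

lemma distinct_map_remove1: "distinct (map f xs) \<Longrightarrow> distinct (map f (remove1 x xs))"
  by (induction xs) (auto dest: subsetD[OF set_remove1_subset])

lemma proper_asgs_remove1:
  assumes "proper_asgs W S" and "(v, a) \<in> set S" and "w \<notin> W" and "w \<notin> fst ` set S - {v}"
  shows "proper_asgs (insert w W) (remove1 (v, a) S)"
    and "snd ` set (remove1 (v, a) S) = snd ` set S - {a}"
proof -
  have set_S: "set (remove1 (v, a) S) = set S - {(v, a)}"
    using assms(1) by (simp add: proper_asgs_def distinct_map)
  have eq_iff: "\<And>y c. (y, c) \<in> set S \<Longrightarrow> y = v \<longleftrightarrow> c = a"
    using proper_asgs_eq_iff[OF assms(1) _ assms(2)] .
  have "fst ` set (remove1 (v, a) S) = fst ` set S - {v}"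
    unfolding set_S using eq_iff by force
  with assms show "proper_asgs (insert w W) (remove1 (v, a) S)"
    by (auto simp: proper_asgs_def distinct_map_remove1)
  show "snd ` set (remove1 (v, a) S) = snd ` set S - {a}"
    unfolding set_S using eq_iff by force
qed

lemma Asgs_move_front:
  "fst p \<notin> fst ` set S1 \<Longrightarrow> wff \<theta> \<Longrightarrow>
    derivable (Imp (Asgs (S1 @ p # S2) \<theta>) (Asgs (p # S1 @ S2) \<theta>))"
proof (induction S1)
  case Nil
  then show ?case by (intro ax_taut) (auto simp: taut_def)
next
  case (Cons q S1)
  obtain x a y b where p: "p = (x, a)" and q: "q = (y, b)" by fastforce
  with Cons have "derivable (Imp (Asg y b (Asgs (S1 @ p # S2) \<theta>))
      (Asg y b (Asg x a (Asgs (S1 @ S2) \<theta>))))"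
    using Asgs_mono[of _ _ "[(y, b)]"] by simp
  moreover have "derivable (Imp (Asg y b (Asg x a (Asgs (S1 @ S2) \<theta>)))
      (Asg x a (Asg y b (Asgs (S1 @ S2) \<theta>))))"
    using Cons.prems p q by (intro ax_comm) auto
  ultimately show ?case
    using p q imp_trans by fastforce
qed

lemma Asgs_perm:
  "distinct (map fst S) \<Longrightarrow> distinct (map fst S') \<Longrightarrow> set S = set S' \<Longrightarrow> wff \<theta> \<Longrightarrow>
    derivable (Imp (Asgs S \<theta>) (Asgs S' \<theta>))"
proof (induction S' arbitrary: S)
  case Nil
  then show ?case by (intro ax_taut) (auto simp: taut_def)
next
  case (Cons p S' S)
  obtain S1 S2 where S: "S = S1 @ p # S2"
    using Cons.prems(3) split_list by (metis list.set_intros(1))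
  have "derivable (Imp (Asgs S \<theta>) (Asgs (p # S1 @ S2) \<theta>))"
    using Cons.prems(1,4) unfolding S by (intro Asgs_move_front) auto
  moreover have "derivable (Imp (Asgs (S1 @ S2) \<theta>) (Asgs S' \<theta>))"
    using Cons.prems S by (intro Cons.IH) (auto simp: distinct_map)
  then have "derivable (Imp (Asgs (p # S1 @ S2) \<theta>) (Asgs (p # S') \<theta>))"
    using Asgs_mono[of _ _ "[p]"] by (cases p) simp
  ultimately show ?case
    by (rule imp_trans)
qed

lemma AsgsK_perm:
  "distinct (map fst S) \<Longrightarrow> distinct (map fst S') \<Longrightarrow> set S = set S' \<Longrightarrow> finite W \<Longrightarrow> sentence \<beta> \<Longrightarrow>
    derivable (Imp (AsgsK W S \<beta>) (AsgsK W S' \<beta>))"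
  unfolding AsgsK_def using Asgs_perm[of S S' "K (W \<union> fst ` set S) \<beta>"]
  by (auto simp: sentence_def)

lemma subst_Asgs: "x \<notin> fst ` set S \<Longrightarrow> subst y x (Asgs S \<phi>) = Asgs S (subst y x \<phi>)"
  by (induction S) auto

lemma admissible_Asgs_K:
  "x \<notin> fst ` set S \<Longrightarrow> y \<notin> fst ` set S \<Longrightarrow> admissible y x (Asgs S (K X \<beta>))"
  by (induction S) auto

lemma AsgsK_rename_head:
  assumes "v \<notin> W \<union> fst ` set S" and "w \<notin> W \<union> fst ` set S" and "finite W" and "sentence \<beta>"
  shows "derivable (Imp (AsgsK W ((v, a) # S) \<beta>) (AsgsK W ((w, a) # S) \<beta>))"
proof -
  have "subst w v (AsgsK (insert v W) S \<beta>) = AsgsK (insert w W) S \<beta>"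
    using assms(1) by (auto simp: AsgsK_def subst_Asgs)
  moreover have "derivable (Imp (Asg v a (AsgsK (insert v W) S \<beta>))
      (Asg w a (subst w v (AsgsK (insert v W) S \<beta>))))"
    using assms unfolding AsgsK_def
    by (intro Asg_rename admissible_Asgs_K) (auto simp: sentence_def)
  ultimately show ?thesis by simp
qed

lemma AsgsK_move_rename:
  assumes "proper_asgs W S" and "(v, a) \<in> set S" and "w \<notin> W" and "w \<notin> fst ` set S - {v}"
    and "finite W" and "sentence \<beta>"
  shows "derivable (Imp (AsgsK W S \<beta>) (AsgsK W ((w, a) # remove1 (v, a) S) \<beta>))"
proof -
  define S1 where "S1 = remove1 (v, a) S"
  have "v \<notin> W"
    using assms(1,2) by (force simp: proper_asgs_def)
  then have v: "proper_asgs (insert v W) S1" and w: "proper_asgs (insert w W) S1"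
    using proper_asgs_remove1(1)[OF assms(1,2)] assms(3,4) by (auto simp: S1_def)
  have "set S = set ((v, a) # S1)"
    using assms(1,2) by (auto simp: S1_def proper_asgs_def distinct_map)
  then have "derivable (Imp (AsgsK W S \<beta>) (AsgsK W ((v, a) # S1) \<beta>))"
    using assms(1,5,6) v by (intro AsgsK_perm) (auto simp: proper_asgs_def)
  moreover have "derivable (Imp (AsgsK W ((v, a) # S1) \<beta>) (AsgsK W ((w, a) # S1) \<beta>))"
  proof (cases "w = v")
    case True
    then show ?thesis using assms(5,6) by (intro ax_taut) (auto simp: taut_def)
  next
    case False
    then show ?thesis
      using v w \<open>v \<notin> W\<close> assms(3,5,6) by (intro AsgsK_rename_head) (auto simp: proper_asgs_def)
  qed
  ultimately show ?thesis
    unfolding S1_def by (rule imp_trans)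
qed

text \<open>If \<open>w\<close> is bound to another agent, that binding is first renamed to the spare variable
  \<open>u\<close>; then \<open>w\<close> itself is spare.\<close>
lemma AsgsK_unclash:
  assumes "proper_asgs W S" and "(v, a) \<in> set S" and "w \<notin> W" and "u \<notin> W \<union> fst ` set S"
    and "finite W" and "sentence \<beta>"
  obtains S' u' where "derivable (Imp (AsgsK W S \<beta>) (AsgsK W S' \<beta>))"
    and "proper_asgs W S'" and "(v, a) \<in> set S'" and "snd ` set S' = snd ` set S"
    and "w \<notin> fst ` set S' - {v}" and "u' \<notin> W \<union> fst ` set S'"
proof (cases "w \<in> fst ` set S - {v}")
  case False
  have "derivable (Imp (AsgsK W S \<beta>) (AsgsK W S \<beta>))"
    using assms(5,6) by (intro ax_taut) (auto simp: taut_def)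
  from that[OF this assms(1,2) refl False assms(4)] show thesis .
next
  case True
  then obtain b where wb: "(w, b) \<in> set S" and "w \<noteq> v"
    by force
  define S' where "S' = (u, b) # remove1 (w, b) S"
  have "set S' = insert (u, b) (set S - {(w, b)})"
    using assms(1) by (simp add: S'_def proper_asgs_def distinct_map)
  moreover have "w \<noteq> u"
    using assms(4) wb by force
  moreover have "w \<notin> fst ` (set S - {(w, b)})"
    using proper_asgs_eq_iff[OF assms(1) _ wb] by force
  ultimately have "(v, a) \<in> set S'" "w \<notin> fst ` set S' - {v}" "w \<notin> W \<union> fst ` set S'"
    using assms(2,3) \<open>w \<noteq> v\<close> by auto
  moreover have "derivable (Imp (AsgsK W S \<beta>) (AsgsK W S' \<beta>))"
    unfolding S'_def using assms wb by (intro AsgsK_move_rename) auto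
  moreover have "proper_asgs W S'" "snd ` set S' = snd ` set S"
    using proper_asgs_remove1[OF assms(1) wb, of u] assms(4) wb by (auto simp: S'_def; force)+
  ultimately show thesis
    using that by blast
qed

lemma AsgsK_step:
  assumes "proper_asgs W S" and "a \<in> snd ` set S" and "w \<notin> W" and "u \<notin> W \<union> fst ` set S"
    and "finite W" and "sentence \<beta>"
  obtains S1 u' where "derivable (Imp (AsgsK W S \<beta>) (AsgsK W ((w, a) # S1) \<beta>))"
    and "proper_asgs (insert w W) S1" and "snd ` set S1 = snd ` set S - {a}"
    and "u' \<notin> insert w W \<union> fst ` set S1"
proof -
  obtain v where va: "(v, a) \<in> set S"
    using assms(2) by force
  obtain S' u' where S_S': "derivable (Imp (AsgsK W S \<beta>) (AsgsK W S' \<beta>))"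
    and S': "proper_asgs W S'" "(v, a) \<in> set S'" "snd ` set S' = snd ` set S"
      "w \<notin> fst ` set S' - {v}" "u' \<notin> W \<union> fst ` set S'"
    using AsgsK_unclash[OF assms(1) va assms(3,4,5,6)] by blast
  define S1 where "S1 = remove1 (v, a) S'"
  have "v \<notin> W"
    using S'(1,2) by (force simp: proper_asgs_def)
  have w: "proper_asgs (insert w W) S1" and v: "proper_asgs (insert v W) S1"
    using proper_asgs_remove1(1)[OF S'(1,2)] assms(3) S'(4) \<open>v \<notin> W\<close> by (auto simp: S1_def)
  have "(if w = v then u' else v) \<notin> insert w W \<union> fst ` set S1"
  proof (cases "w = v")
    case True
    have "fst ` set S1 \<subseteq> fst ` set S'"
      unfolding S1_def using set_remove1_subset by (rule image_mono)
    with True S'(2,5) show ?thesis by force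
  next
    case False
    with v \<open>v \<notin> W\<close> show ?thesis by (auto simp: proper_asgs_def)
  qed
  moreover have "snd ` set S1 = snd ` set S - {a}"
    using proper_asgs_remove1(2)[OF S'(1,2) assms(3) S'(4)] S'(3) by (simp add: S1_def)
  moreover have "derivable (Imp (AsgsK W S \<beta>) (AsgsK W ((w, a) # S1) \<beta>))"
    using S_S' AsgsK_move_rename[OF S'(1,2) assms(3) S'(4) assms(5,6)]
    unfolding S1_def by (rule imp_trans)
  ultimately show thesis
    using that w by blast
qed

lemma AsgsK_same_agents:
  "proper_asgs W S \<Longrightarrow> proper_asgs W T \<Longrightarrow> snd ` set S = snd ` set T \<Longrightarrow>
    u \<notin> W \<union> fst ` set S \<Longrightarrow> finite W \<Longrightarrow> sentence \<beta> \<Longrightarrow>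
    derivable (Imp (AsgsK W S \<beta>) (AsgsK W T \<beta>))"
proof (induction T arbitrary: S W u)
  case Nil
  then show ?case by (intro ax_taut) (auto simp: taut_def)
next
  case (Cons p T)
  obtain w a where p: "p = (w, a)" by fastforce
  with Cons.prems(2,3) have a: "a \<in> snd ` set S" and w: "w \<notin> W" by auto
  obtain S1 u' where
      S_S1: "derivable (Imp (AsgsK W S \<beta>) (AsgsK W ((w, a) # S1) \<beta>))"
    and S1: "proper_asgs (insert w W) S1" "snd ` set S1 = snd ` set S - {a}"
      "u' \<notin> insert w W \<union> fst ` set S1"
    by (rule AsgsK_step[OF Cons.prems(1) a w Cons.prems(4-6)])
  have "derivable (Imp (AsgsK (insert w W) S1 \<beta>) (AsgsK (insert w W) T \<beta>))"
    using Cons.prems(2,3,5,6) S1 p by (intro Cons.IH[of _ _ u']) auto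
  then have "derivable (Imp (AsgsK W ((w, a) # S1) \<beta>) (AsgsK W ((w, a) # T) \<beta>))"
    using Asgs_mono[of _ _ "[(w, a)]"] by simp
  with S_S1 show ?case
    unfolding p by (rule imp_trans)
qed

lemma AsgsK_append:
  assumes "fst ` set R \<inter> (W \<union> fst ` set S) = {}" and "finite W" and "sentence \<beta>"
  shows "derivable (Imp (AsgsK W S \<beta>) (AsgsK W (S @ R) \<beta>))"
proof -
  have "derivable (Imp (K (W \<union> fst ` set S) \<beta>) (Asgs R (K (W \<union> fst ` set S) \<beta>)))"
    using assms by (intro Asgs_vac) (auto simp: sentence_def)
  moreover have "derivable (Imp (K (W \<union> fst ` set S) \<beta>) (K (W \<union> fst ` set (S @ R)) \<beta>))"
    using assms by (intro ax_mono) (auto simp: sentence_def)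
  ultimately have "derivable (Imp (K (W \<union> fst ` set S) \<beta>) (Asgs R (K (W \<union> fst ` set (S @ R)) \<beta>)))"
    using imp_trans Asgs_mono by blast
  then show ?thesis
    unfolding AsgsK_def using Asgs_mono by fastforce
qed

lemma Asgs_Kvec_mono:
  assumes "valid_choice ch" and "B \<subseteq> C" and "sentence \<beta>"
  shows "derivable (Imp (Asgs (ch B) (Kvec (ch B) \<beta>)) (Asgs (ch C) (Kvec (ch C) \<beta>)))"
proof (cases "B = C")
  case True
  with assms(3) show ?thesis
    by (intro ax_taut) (auto simp: taut_def sentence_def)
next
  case False
  define S where "S = ch B"
  define T where "T = ch C"
  have S: "proper_asgs {} S" "snd ` set S = B" and T: "proper_asgs {} T" "snd ` set T = C"
    using assms(1) by (auto simp: valid_choice_def proper_asgs_def S_def T_def simp flip: set_map)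
  have "card (fst ` set S) = card B" "card (fst ` set T) = card C"
    using S T by (auto simp: proper_asgs_def distinct_card simp flip: set_map)
  moreover have "card B < card C"
    using assms(2) False by (simp add: psubset_card_mono)
  \<comment> \<open>Since \<open>T\<close> binds more variables than \<open>S\<close>, a spare variable exists.\<close>
  ultimately obtain u where u: "u \<notin> fst ` set S"
    by (metis card_mono finite_imageI finite_set leD subsetI)
  define TB where "TB = filter (\<lambda>p. snd p \<in> B) T"
  define R where "R = filter (\<lambda>p. snd p \<notin> B) T"
  have TB: "proper_asgs {} TB"
    using T(1) by (simp add: TB_def proper_asgs_def distinct_map_filter)
  have "snd ` set TB = B"
    using T(2) assms(2) by (auto simp: TB_def image_iff)
  have disjoint: "fst ` set R \<inter> fst ` set TB = {}"
    using proper_asgs_eq_iff[OF T(1)] by (auto simp: R_def TB_def)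
  have "derivable (Imp (AsgsK {} S \<beta>) (AsgsK {} TB \<beta>))"
    using S TB \<open>snd ` set TB = B\<close> u assms(3) by (intro AsgsK_same_agents) auto
  moreover have "derivable (Imp (AsgsK {} TB \<beta>) (AsgsK {} (TB @ R) \<beta>))"
    using disjoint assms(3) by (intro AsgsK_append) auto
  moreover have "derivable (Imp (AsgsK {} (TB @ R) \<beta>) (AsgsK {} T \<beta>))"
    using T(1) TB disjoint assms(3)
    by (intro AsgsK_perm) (auto simp: R_def TB_def proper_asgs_def distinct_map_filter)
  ultimately show ?thesis
    unfolding S_def T_def AsgsK_Nil_Kvec by (meson imp_trans)
qed

lemma chi_form_wff: "chi_form x \<chi> \<Longrightarrow> wff \<chi> \<and> FV \<chi> \<subseteq> {x}"
  by (induction rule: chi_form.induct) (auto simp: sentence_def)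

lemma peval_Bang:
  "peval v (Bang x \<chi> A) \<longleftrightarrow>
    (\<forall>a\<in>A. \<not> v (Asg x a (Neg \<chi>))) \<and> (\<forall>b\<in>UNIV - A. v (Asg x b (Neg \<chi>)))"
  by (simp add: Bang_def Dia_def)

lemma sentence_Kphi:
  assumes "wff \<chi>" and "FV \<chi> \<subseteq> {x}" and "sentence \<beta>"
  shows "sentence (Kphi ch x \<chi> \<beta>)"
  using assms by (auto simp: Kphi_def Bang_def sentence_def)

lemma peval_Kphi:
  "peval v (Kphi ch x \<chi> \<beta>) \<longleftrightarrow>
    (\<forall>A. peval v (Bang x \<chi> A) \<longrightarrow> peval v (Asgs (ch A) (Kvec (ch A) \<beta>)))"
  by (simp add: Kphi_def)

lemma Asgs_Kvec_Dia_imp_Kphi: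
  assumes "valid_choice ch" and "wff \<chi>" and "FV \<chi> \<subseteq> {x}" and "sentence \<beta>"
  shows "derivable (Imp (And (Asgs (ch B) (Kvec (ch B) \<beta>)) (ConjSet (\<lambda>a. Dia x a \<chi>) B))
    (Kphi ch x \<chi> \<beta>))"
    (is "derivable (Imp (And ?D ?PB) _)")
proof (rule taut_consequence[of "(\<lambda>C. Imp ?D (Asgs (ch C) (Kvec (ch C) \<beta>))) ` {C. B \<subseteq> C}"])
  show "\<forall>\<gamma>\<in>(\<lambda>C. Imp ?D (Asgs (ch C) (Kvec (ch C) \<beta>))) ` {C. B \<subseteq> C}. derivable \<gamma>"
    using Asgs_Kvec_mono[OF assms(1) _ assms(4)] by blast
  show "\<forall>v. (\<forall>\<gamma>\<in>(\<lambda>C. Imp ?D (Asgs (ch C) (Kvec (ch C) \<beta>))) ` {C. B \<subseteq> C}. peval v \<gamma>) \<longrightarrow>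
      peval v (Imp (And ?D ?PB) (Kphi ch x \<chi> \<beta>))"
  proof (intro allI impI)
    fix v
    assume mono: "\<forall>\<gamma>\<in>(\<lambda>C. Imp ?D (Asgs (ch C) (Kvec (ch C) \<beta>))) ` {C. B \<subseteq> C}. peval v \<gamma>"
    show "peval v (Imp (And ?D ?PB) (Kphi ch x \<chi> \<beta>))"
      unfolding peval_Imp peval_Kphi
    proof (intro impI allI)
      fix A
      assume "peval v (And ?D ?PB)" and "peval v (Bang x \<chi> A)"
      moreover from this have "B \<subseteq> A"
        by (auto simp: peval_Bang Dia_def)
      ultimately show "peval v (Asgs (ch A) (Kvec (ch A) \<beta>))"
        using mono by simp
    qed
  qed
qed (use sentence_Kphi[OF assms(2-4)] assms in \<open>auto simp: sentence_def\<close>)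

lemma Kphi_Bang_imp_Kvec_Kphi:
  assumes "valid_choice ch" and "chi_form x \<chi>" and "sentence \<beta>"
  shows "derivable (Imp (Kphi ch x \<chi> \<beta>)
    (Imp (Bang x \<chi> B) (Asgs (ch B) (Kvec (ch B) (Kphi ch x \<chi> \<beta>)))))"
proof -
  define S where "S = ch B"
  define D where "D = Asgs S (Kvec S \<beta>)"
  define PB where "PB = ConjSet (\<lambda>a. Dia x a \<chi>) B"
  have \<chi>: "wff \<chi>" "FV \<chi> \<subseteq> {x}"
    using chi_form_wff[OF assms(2)] by auto
  have KP: "sentence (Kphi ch x \<chi> \<beta>)"
    using sentence_Kphi[OF \<chi> assms(3)] .
  have S: "distinct (map fst S)" "snd ` set S = B"
    using assms(1) by (auto simp: valid_choice_def S_def simp flip: set_map)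
  have "introspective S (And D PB)"
    unfolding D_def PB_def
    using assms(3) S chi_form_rigid[OF assms(2)]
    by (intro introspective_And introspective_Asgs_Kvec introspective_ConjSet ballI
        introspective_Dia) auto
  moreover have "derivable (Imp (And D PB) (Kphi ch x \<chi> \<beta>))"
    unfolding D_def PB_def S_def using assms(1) \<chi> assms(3) by (rule Asgs_Kvec_Dia_imp_Kphi)
  ultimately have "derivable (Imp (And D PB) (Asgs S (Kvec S (Kphi ch x \<chi> \<beta>))))"
    using KP by (intro introspective_imp) (auto simp: sentence_def)
  moreover have "\<forall>v. peval v (Kphi ch x \<chi> \<beta>) \<longrightarrow> peval v (Bang x \<chi> B) \<longrightarrow> peval v (And D PB)"
    unfolding peval_Kphi by (simp add: D_def PB_def S_def Bang_def)
  ultimately show ?thesis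
    using KP \<chi> unfolding S_def
    by (intro taut_consequence[of "{Imp (And D PB) (Asgs (ch B) (Kvec (ch B) (Kphi ch x \<chi> \<beta>)))}"])
      (auto simp: sentence_def Bang_def D_def PB_def S_def simp del: peval.simps)
qed

theorem proposition7:
  fixes x :: "'v::countable"
    and \<chi> \<beta> :: "('p::countable, 'v, 'a::finite) fm"
    and ch :: "'a set \<Rightarrow> ('v \<times> 'a) list"
  assumes "valid_choice ch"
    and "chi_form x \<chi>"
    and "sentence \<beta>"
  shows "derivable (Imp (Kphi ch x \<chi> \<beta>) (Kphi ch x \<chi> (Kphi ch x \<chi> \<beta>)))"
proof -
  let ?KP = "Kphi ch x \<chi> \<beta>"
  let ?\<Gamma> = "range (\<lambda>B. Imp ?KP (Imp (Bang x \<chi> B) (Asgs (ch B) (Kvec (ch B) ?KP))))"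
  have \<chi>: "wff \<chi>" "FV \<chi> \<subseteq> {x}"
    using chi_form_wff[OF assms(2)] by auto
  have "sentence ?KP" "sentence (Kphi ch x \<chi> ?KP)"
    using sentence_Kphi[OF \<chi>] assms(3) by blast+
  moreover have "\<forall>\<gamma>\<in>?\<Gamma>. derivable \<gamma>"
    using Kphi_Bang_imp_Kvec_Kphi[OF assms] by blast
  ultimately show ?thesis
    by (intro taut_consequence[of ?\<Gamma>]) (auto simp: sentence_def peval_Kphi simp del: Kvec_eq)
qed

end
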